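(* Let $T=((\Omega,\mathcal{A}),\{(\Omega,\mathcal{M}_i)\}_{i\in N},\{t_i\}_{i\in N})$ be a type space. The players' beliefs in $T$ are universally consistent if and only if for every $I\subseteq N$ (not necessarily finite) and every $I$-common certainty component $S$ there exists $P\in\bigcap_{i\in I}\Pi_i$ with $\inf\{P(E):E\in\mathcal{A},S\subseteq E\}>0$.
   Context: A field on a set $X$ is a collection of subsets of $X$ containing $X$ and closed under complements and finite intersections. For a field $\mathcal{A}$ on $\Omega$, $\mathrm{pba}(\Omega,\mathcal{A})$ is the set of finitely additive nonnegative $P:\mathcal{A}\to\mathbb{R}$ with $P(\Omega)=1$; $B(\Omega,\mathcal{A})$ the sup-norm closure of the linear span of indicators of sets in $\mathcal{A}$; bounded finitely additive set functions carry the weak* topology (weakest making $\mu\mapsto\int f\,d\mu$ continuous for all $f\in B(\Omega,\mathcal{A})$), $\overline{\,\cdot\,}^\ast$ denotes weak* closure. A type space: $N$ a nonempty set of players, fields $\mathcal{M}_i\subseteq\mathcal{A}$ on a set $\Omega$, $t_i:\Omega\times\mathcal{A}\to[0,1]$ with $t_i(\omega,\cdot)\in\mathrm{pba}(\Omega,\mathcal{A})$, $t_i(\cdot,E)\in B(\Omega,\mathcal{M}_i)$ for $E\in\mathcal{A}$, and $t_i(\omega,E)=1$ whenever $E\in\mathcal{M}_i$, $\omega\in E$. $\Pi_i=\overline{\mathrm{conv}\{t_i(\omega,\cdot):\omega\in\Omega\}}^\ast$ (equivalently the $P\in\mathrm{pba}(\Omega,\mathcal{A})$ with $P(E\cap F)=\int_F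 t_i(\cdot,E)\,dP$ for all $E\in\mathcal{A},F\in\mathcal{M}_i$). For $I\subseteq N$, a nonempty $S\subseteq\Omega$ is an $I$-common certainty component if there is $E\in\mathcal{A}$ with $E\subseteq S$ and $t_i(\omega,E)=1$ for all $\omega\in S$, $i\in I$. The players' beliefs are universally consistent if for every finite $I\subseteq N$ and every $I$-common certainty component $S$ there exists $P\in\bigcap_{i\in I}\Pi_i$ with $\inf\{P(E):E\in\mathcal{A},S\subseteq E\}>0$. *)

theory Defs
  imports "HOL-Analysis.Analysis"
begin

definition is_field :: "'a set \<Rightarrow> 'a set set \<Rightarrow> bool" where
  "is_field X A \<longleftrightarrow> A \<subseteq> Pow X \<and> X \<in> A \<and> (\<forall>E\<in>A. X - E \<in> A)
     \<and> (\<forall>E\<in>A. \<forall>F\<in>A. E \<inter> F \<in> A)"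

definition bfa :: "'a set \<Rightarrow> 'a set set \<Rightarrow> ('a set \<Rightarrow> real) set" where
  "bfa \<Omega> A = {\<mu>. (\<forall>E\<in>A. \<forall>F\<in>A. E \<inter> F = {} \<longrightarrow> \<mu> (E \<union> F) = \<mu> E + \<mu> F)
                 \<and> (\<exists>c. \<forall>E\<in>A. \<bar>\<mu> E\<bar> \<le> c)}"

definition pba :: "'a set \<Rightarrow> 'a set set \<Rightarrow> ('a set \<Rightarrow> real) set" where
  "pba \<Omega> A = {P. (\<forall>E\<in>A. \<forall>F\<in>A. E \<inter> F = {} \<longrightarrow> P (E \<union> F) = P E + P F)
                 \<and> (\<forall>E\<in>A. 0 \<le> P E) \<and> P \<Omega> = 1}"

text \<open>B(\<Omega>,A): sup-norm (on \<Omega>) closure of the span of indicators of sets in A.\<close>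
definition Bfun :: "'a set \<Rightarrow> 'a set set \<Rightarrow> ('a \<Rightarrow> real) set" where
  "Bfun \<Omega> A = {f. \<forall>\<epsilon>>0. \<exists>F c. finite F \<and> F \<subseteq> A \<and>
       (\<forall>x\<in>\<Omega>. \<bar>f x - (\<Sum>E\<in>F. c E * indicator E x)\<bar> < \<epsilon>)}"

definition fa_integral :: "'a set \<Rightarrow> 'a set set \<Rightarrow> ('a set \<Rightarrow> real) \<Rightarrow> ('a \<Rightarrow> real) \<Rightarrow> real" where
  "fa_integral \<Omega> A \<mu> f = (THE r. \<forall>\<epsilon>>0. \<exists>\<delta>>0. \<forall>F c. finite F \<and> F \<subseteq> A \<and>
       (\<forall>x\<in>\<Omega>. \<bar>f x - (\<Sum>E\<in>F. c E * indicator E x)\<bar> < \<delta>) \<longrightarrow>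
       \<bar>(\<Sum>E\<in>F. c E * \<mu> E) - r\<bar> < \<epsilon>)"

definition weak_star :: "'a set \<Rightarrow> 'a set set \<Rightarrow> ('a set \<Rightarrow> real) topology" where
  "weak_star \<Omega> A = subtopology
     (topology_generated_by
        {{\<mu> \<in> bfa \<Omega> A. fa_integral \<Omega> A \<mu> f \<in> U} | f U. f \<in> Bfun \<Omega> A \<and> open U})
     (bfa \<Omega> A)"

definition type_space :: "'a set \<Rightarrow> 'a set set \<Rightarrow> 'i set \<Rightarrow> ('i \<Rightarrow> 'a set set)
     \<Rightarrow> ('i \<Rightarrow> 'a \<Rightarrow> 'a set \<Rightarrow> real) \<Rightarrow> bool" where
  "type_space \<Omega> A N M t \<longleftrightarrow> N \<noteq> {} \<and> is_field \<Omega> A \<and>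
     (\<forall>i\<in>N. is_field \<Omega> (M i) \<and> M i \<subseteq> A \<and>
        (\<forall>\<omega>\<in>\<Omega>. \<forall>E\<in>A. 0 \<le> t i \<omega> E \<and> t i \<omega> E \<le> 1) \<and>
        (\<forall>\<omega>\<in>\<Omega>. t i \<omega> \<in> pba \<Omega> A) \<and>
        (\<forall>E\<in>A. (\<lambda>\<omega>. t i \<omega> E) \<in> Bfun \<Omega> (M i)) \<and>
        (\<forall>E\<in>M i. \<forall>\<omega>\<in>E. t i \<omega> E = 1))"

definition type_conv :: "'a set \<Rightarrow> ('a \<Rightarrow> 'a set \<Rightarrow> real) \<Rightarrow> ('a set \<Rightarrow> real) set" where
  "type_conv \<Omega> ti = {P. \<exists>W a. finite W \<and> W \<noteq> {} \<and> W \<subseteq> \<Omega> \<and> (\<forall>\<omega>\<in>W. 0 \<le> a \<omega>)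
      \<and> (\<Sum>\<omega>\<in>W. a \<omega>) = 1 \<and> P = (\<lambda>E. \<Sum>\<omega>\<in>W. a \<omega> * ti \<omega> E)}"

definition Pi_set :: "'a set \<Rightarrow> 'a set set \<Rightarrow> ('i \<Rightarrow> 'a \<Rightarrow> 'a set \<Rightarrow> real) \<Rightarrow> 'i
     \<Rightarrow> ('a set \<Rightarrow> real) set" where
  "Pi_set \<Omega> A t i = (weak_star \<Omega> A) closure_of (type_conv \<Omega> (t i))"

definition cc_component :: "'a set \<Rightarrow> 'a set set \<Rightarrow> ('i \<Rightarrow> 'a \<Rightarrow> 'a set \<Rightarrow> real)
     \<Rightarrow> 'i set \<Rightarrow> 'a set \<Rightarrow> bool" where
  "cc_component \<Omega> A t I S \<longleftrightarrow> S \<noteq> {} \<and> S \<subseteq> \<Omega> \<and>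
     (\<exists>E\<in>A. E \<subseteq> S \<and> (\<forall>\<omega>\<in>S. \<forall>i\<in>I. t i \<omega> E = 1))"

text \<open>Existence of a common prior-like P \<in> pba \<inter> \<Inter>_{i\<in>I} \<Pi>_i charging S (outer measure > 0).\<close>
definition consistent_on :: "'a set \<Rightarrow> 'a set set \<Rightarrow> ('i \<Rightarrow> 'a \<Rightarrow> 'a set \<Rightarrow> real)
     \<Rightarrow> 'i set \<Rightarrow> 'a set \<Rightarrow> bool" where
  "consistent_on \<Omega> A t I S \<longleftrightarrow> (\<exists>P\<in>pba \<Omega> A. (\<forall>i\<in>I. P \<in> Pi_set \<Omega> A t i) \<and>
      Inf {P E | E. E \<in> A \<and> S \<subseteq> E} > 0)"

definition universally_consistent :: "'a set \<Rightarrow> 'a set set \<Rightarrow> 'i set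
     \<Rightarrow> ('i \<Rightarrow> 'a \<Rightarrow> 'a set \<Rightarrow> real) \<Rightarrow> bool" where
  "universally_consistent \<Omega> A N t \<longleftrightarrow>
     (\<forall>I. I \<subseteq> N \<and> finite I \<longrightarrow> (\<forall>S. cc_component \<Omega> A t I S \<longrightarrow> consistent_on \<Omega> A t I S))"

end

theory Submission
  imports Defs
begin

text \<open>For finite I the condition is universal consistency itself. For infinite I, let
  E \<subseteq> S be the event of which all players in I are certain throughout S. A probability charge
  lies in \<Pi>_i iff on any finitely many events it is approximated by mixtures of i's types;
  this is a closed condition for pointwise convergence, and it is preserved by conditioning
  on E, since i is certain of E on E. Conditioning on E the priors that universal consistency
  provides for the finite J \<subseteq> I gives points of the compact set of [0,1]-valued probability
  charges Q with Q(E) = 1 lying in \<Pi>_j for j \<in> J; by the finite intersection property one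
  such Q lies in every \<Pi>_i, i \<in> I, and every event containing S has Q-probability 1.\<close>

section \<open>Fields of sets and finitely additive probabilities\<close>

lemma field_subset: "is_field \<Omega> A \<Longrightarrow> E \<in> A \<Longrightarrow> E \<subseteq> \<Omega>"
  by (auto simp: is_field_def)

lemma field_space: "is_field \<Omega> A \<Longrightarrow> \<Omega> \<in> A"
  by (simp add: is_field_def)

lemma field_compl: "is_field \<Omega> A \<Longrightarrow> E \<in> A \<Longrightarrow> \<Omega> - E \<in> A"
  by (simp add: is_field_def)

lemma field_Int: "is_field \<Omega> A \<Longrightarrow> E \<in> A \<Longrightarrow> F \<in> A \<Longrightarrow> E \<inter> F \<in> A"
  by (simp add: is_field_def)

lemma field_empty: "is_field \<Omega> A \<Longrightarrow> {} \<in> A"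
  using field_compl[OF _ field_space] by fastforce

lemma field_Diff:
  assumes "is_field \<Omega> A" "E \<in> A" "F \<in> A"
  shows "E - F \<in> A"
proof -
  have "E - F = E \<inter> (\<Omega> - F)"
    using field_subset[OF assms(1,2)] by auto
  then show ?thesis
    using assms by (simp add: field_Int field_compl)
qed

lemma field_Un:
  assumes "is_field \<Omega> A" "E \<in> A" "F \<in> A"
  shows "E \<union> F \<in> A"
proof -
  have "E \<union> F = \<Omega> - ((\<Omega> - E) \<inter> (\<Omega> - F))"
    using field_subset[OF assms(1,2)] field_subset[OF assms(1,3)] by auto
  then show ?thesis
    using assms by (simp add: field_Int field_compl)
qed

lemma field_simple_preimage:
  fixes c :: "'a set \<Rightarrow> real"
  assumes "is_field \<Omega> M" "finite F" "F \<subseteq> M"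
  shows "{x\<in>\<Omega>. (\<Sum>E\<in>F. c E * indicator E x) \<in> Y} \<in> M"
  using assms(2,3)
proof (induction F arbitrary: Y rule: finite_induct)
  case empty
  then show ?case
    using field_space[OF assms(1)] field_empty[OF assms(1)] by (cases "0 \<in> Y") auto
next
  case (insert E0 F)
  let ?s = "\<lambda>x. \<Sum>E\<in>F. c E * indicator E x"
  have "(\<Sum>E\<in>insert E0 F. c E * indicator E x) = (if x \<in> E0 then c E0 else 0) + ?s x" for x
    using sum.insert[OF insert.hyps, of "\<lambda>E. c E * indicator E x"] by simp
  then have eq: "{x\<in>\<Omega>. (\<Sum>E\<in>insert E0 F. c E * indicator E x) \<in> Y} =
      (E0 \<inter> {x\<in>\<Omega>. ?s x \<in> {y. c E0 + y \<in> Y}}) \<union> ((\<Omega> - E0) \<inter> {x\<in>\<Omega>. ?s x \<in> Y})"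
    using field_subset[OF assms(1), of E0] insert.prems by auto
  show ?case
    unfolding eq using insert.prems
    by (intro field_Un[OF assms(1)] field_Int[OF assms(1)] field_compl[OF assms(1)] insert.IH) auto
qed

lemma pba_additive:
  "P \<in> pba \<Omega> A \<Longrightarrow> E \<in> A \<Longrightarrow> F \<in> A \<Longrightarrow> E \<inter> F = {} \<Longrightarrow> P (E \<union> F) = P E + P F"
  by (simp add: pba_def)

lemma pba_nonneg: "P \<in> pba \<Omega> A \<Longrightarrow> E \<in> A \<Longrightarrow> 0 \<le> P E"
  by (simp add: pba_def)

lemma pba_space: "P \<in> pba \<Omega> A \<Longrightarrow> P \<Omega> = 1"
  by (simp add: pba_def)

lemma pba_empty: "is_field \<Omega> A \<Longrightarrow> P \<in> pba \<Omega> A \<Longrightarrow> P {} = 0"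
  using pba_additive[of P \<Omega> A "{}" "{}"] field_empty by fastforce

lemma pba_Int_Diff:
  assumes "is_field \<Omega> A" "P \<in> pba \<Omega> A" "E \<in> A" "B \<in> A"
  shows "P E = P (E \<inter> B) + P (E - B)"
proof -
  have "P ((E \<inter> B) \<union> (E - B)) = P (E \<inter> B) + P (E - B)"
    using assms by (intro pba_additive) (auto simp: field_Int field_Diff)
  moreover have "(E \<inter> B) \<union> (E - B) = E"
    by auto
  ultimately show ?thesis
    by simp
qed

lemma pba_mono:
  assumes "is_field \<Omega> A" "P \<in> pba \<Omega> A" "E \<in> A" "F \<in> A" "E \<subseteq> F"
  shows "P E \<le> P F"
  using pba_Int_Diff[OF assms(1,2,4,3)] pba_nonneg[OF assms(2) field_Diff[OF assms(1,4,3)]] assms(5)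
  by (simp add: Int_absorb1)

lemma pba_le_1:
  assumes "is_field \<Omega> A" "P \<in> pba \<Omega> A" "E \<in> A"
  shows "P E \<le> 1"
  using pba_mono[OF assms field_space[OF assms(1)] field_subset[OF assms(1,3)]] pba_space[OF assms(2)]
  by simp

lemma pba_compl:
  assumes "is_field \<Omega> A" "P \<in> pba \<Omega> A" "E \<in> A"
  shows "P (\<Omega> - E) = 1 - P E"
  using pba_Int_Diff[OF assms(1,2) field_space[OF assms(1)] assms(3)] field_subset[OF assms(1,3)]
  by (simp add: pba_space[OF assms(2)] Int_absorb1)

lemma pba_in_bfa:
  assumes "is_field \<Omega> A" "P \<in> pba \<Omega> A"
  shows "P \<in> bfa \<Omega> A"
proof -
  have "\<forall>E\<in>A. \<bar>P E\<bar> \<le> 1"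
    using pba_nonneg[OF assms(2)] pba_le_1[OF assms] by (simp add: abs_le_iff)
  then show ?thesis
    using assms(2) unfolding bfa_def pba_def by blast
qed

lemma pba_Int_superset_le:
  assumes "is_field \<Omega> A" "P \<in> pba \<Omega> A" "G \<in> A" "E \<in> A" "U \<in> A" "E \<subseteq> U"
  shows "P (G \<inter> E) \<le> P (G \<inter> U)" "P (G \<inter> U) \<le> P (G \<inter> E) + P (U - E)"
proof -
  have GU: "G \<inter> U \<in> A"
    using assms by (simp add: field_Int)
  have "P (G \<inter> U) = P (G \<inter> U \<inter> E) + P (G \<inter> U - E)"
    using pba_Int_Diff[OF assms(1,2) GU assms(4)] .
  moreover have "G \<inter> U \<inter> E = G \<inter> E"
    using assms(6) by blast
  moreover have "0 \<le> P (G \<inter> U - E)" "P (G \<inter> U - E) \<le> P (U - E)"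
    using assms GU by (auto intro!: pba_nonneg pba_mono field_Diff)
  ultimately show "P (G \<inter> E) \<le> P (G \<inter> U)" "P (G \<inter> U) \<le> P (G \<inter> E) + P (U - E)"
    by simp_all
qed

section \<open>Integrals of uniform limits of simple functions\<close>

lemma pba_simple_le:
  assumes fld: "is_field \<Omega> A" and P: "P \<in> pba \<Omega> A"
    and "finite F" "F \<subseteq> A" "B \<in> A" "\<forall>x\<in>B. (\<Sum>E\<in>F. c E * indicator E x) \<le> K"
  shows "(\<Sum>E\<in>F. c E * P (E \<inter> B)) \<le> K * P B"
  using assms(3-)
proof (induction F arbitrary: B K rule: finite_induct)
  case empty
  then show ?case
    using pba_empty[OF fld P] pba_nonneg[OF P] by (cases "B = {}") force+
next
  case (insert E0 F)
  let ?s = "\<lambda>x. \<Sum>E\<in>F. c E * indicator E x"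
  have B: "B \<inter> E0 \<in> A" "B - E0 \<in> A"
    using insert.prems fld by (auto intro: field_Int field_Diff)
  have s_le: "?s x \<le> K - c E0 * indicator E0 x" if "x \<in> B" for x
    using bspec[OF insert.prems(3) that] unfolding sum.insert[OF insert.hyps] by linarith
  have "?s x \<le> K - c E0" if "x \<in> B \<inter> E0" for x
    using s_le[of x] that by simp
  moreover have "?s x \<le> K" if "x \<in> B - E0" for x
    using s_le[of x] that by simp
  ultimately have on_E0: "(\<Sum>E\<in>F. c E * P (E \<inter> (B \<inter> E0))) \<le> (K - c E0) * P (B \<inter> E0)"
    and off_E0: "(\<Sum>E\<in>F. c E * P (E \<inter> (B - E0))) \<le> K * P (B - E0)"
    using insert.IH insert.prems(1) B by blast+
  have "P (E \<inter> B) = P (E \<inter> (B \<inter> E0)) + P (E \<inter> (B - E0))" if "E \<in> F" for E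
  proof -
    have "E \<in> A"
      using that insert.prems(1) by blast
    then show ?thesis
      using pba_Int_Diff[OF fld P field_Int[OF fld _ insert.prems(2)], of E E0] insert.prems(1)
      by (simp add: Int_assoc Int_Diff)
  qed
  then have "(\<Sum>E\<in>F. c E * P (E \<inter> B)) =
      (\<Sum>E\<in>F. c E * P (E \<inter> (B \<inter> E0))) + (\<Sum>E\<in>F. c E * P (E \<inter> (B - E0)))"
    by (simp add: distrib_left sum.distrib)
  moreover have "P B = P (B \<inter> E0) + P (B - E0)"
    using pba_Int_Diff[OF fld P insert.prems(2), of E0] insert.prems(1) by simp
  moreover have "P (E0 \<inter> B) = P (B \<inter> E0)"
    by (simp add: Int_commute)
  ultimately show ?case
    using on_E0 off_E0 insert.hyps by (simp add: algebra_simps)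
qed

lemma pba_simple_abs_le:
  assumes fld: "is_field \<Omega> A" and P: "P \<in> pba \<Omega> A" and F: "finite F" "F \<subseteq> A"
    and bound: "\<forall>x\<in>\<Omega>. \<bar>\<Sum>E\<in>F. c E * indicator E x\<bar> \<le> d"
  shows "\<bar>\<Sum>E\<in>F. c E * P E\<bar> \<le> d"
proof -
  have E_\<Omega>: "E \<inter> \<Omega> = E" if "E \<in> F" for E
    using that F field_subset[OF fld] by blast
  have "(\<Sum>E\<in>F. c E * P (E \<inter> \<Omega>)) \<le> d * P \<Omega>"
    using bound by (intro pba_simple_le[OF fld P F field_space[OF fld]]) auto
  moreover have "(\<Sum>E\<in>F. - c E * P (E \<inter> \<Omega>)) \<le> d * P \<Omega>"
    using bound by (intro pba_simple_le[OF fld P F field_space[OF fld]]) (auto simp: sum_negf)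
  ultimately show ?thesis
    using E_\<Omega> pba_space[OF P] by (simp add: sum_negf)
qed

lemma sum_diff_eq_sum_Un:
  fixes g :: "'b \<Rightarrow> 'c::ring"
  assumes "finite F1" "finite F2"
  shows "(\<Sum>E\<in>F1. c1 E * g E) - (\<Sum>E\<in>F2. c2 E * g E) =
    (\<Sum>E\<in>F1 \<union> F2. ((if E \<in> F1 then c1 E else 0) - (if E \<in> F2 then c2 E else 0)) * g E)"
proof -
  have "(\<Sum>E\<in>F1 \<union> F2. (if E \<in> F1 then c1 E else 0) * g E) = (\<Sum>E\<in>F1. c1 E * g E)"
       "(\<Sum>E\<in>F1 \<union> F2. (if E \<in> F2 then c2 E else 0) * g E) = (\<Sum>E\<in>F2. c2 E * g E)"
    by (rule sum.mono_neutral_cong_right; use assms in auto)+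
  then show ?thesis
    by (simp add: left_diff_distrib sum_subtractf)
qed

lemma pba_simple_diff_le:
  assumes fld: "is_field \<Omega> A" and P: "P \<in> pba \<Omega> A"
    and F: "finite F1" "F1 \<subseteq> A" "finite F2" "F2 \<subseteq> A"
    and bound: "\<forall>x\<in>\<Omega>. \<bar>(\<Sum>E\<in>F1. c1 E * indicator E x) - (\<Sum>E\<in>F2. c2 E * indicator E x)\<bar> \<le> d"
  shows "\<bar>(\<Sum>E\<in>F1. c1 E * P E) - (\<Sum>E\<in>F2. c2 E * P E)\<bar> \<le> d"
  using pba_simple_abs_le[OF fld P, of "F1 \<union> F2"] bound F
  by (simp only: sum_diff_eq_sum_Un[OF F(1,3)] finite_Un Un_subset_iff)

definition simple_approx ::
    "'a set \<Rightarrow> 'a set set \<Rightarrow> ('a \<Rightarrow> real) \<Rightarrow> 'a set set \<Rightarrow> ('a set \<Rightarrow> real) \<Rightarrow> real \<Rightarrow> bool" where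
  "simple_approx \<Omega> A f F c \<delta> \<longleftrightarrow>
     finite F \<and> F \<subseteq> A \<and> (\<forall>x\<in>\<Omega>. \<bar>f x - (\<Sum>E\<in>F. c E * indicator E x)\<bar> < \<delta>)"

lemma Bfun_simple_approx: "f \<in> Bfun \<Omega> A \<Longrightarrow> 0 < \<delta> \<Longrightarrow> \<exists>F c. simple_approx \<Omega> A f F c \<delta>"
  by (auto simp: Bfun_def simple_approx_def)

lemma simple_approx_sums_close:
  assumes "is_field \<Omega> A" "P \<in> pba \<Omega> A"
    and approx1: "simple_approx \<Omega> A f F1 c1 \<delta>1" and approx2: "simple_approx \<Omega> A f F2 c2 \<delta>2"
  shows "\<bar>(\<Sum>E\<in>F1. c1 E * P E) - (\<Sum>E\<in>F2. c2 E * P E)\<bar> \<le> \<delta>1 + \<delta>2"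
proof (rule pba_simple_diff_le[OF assms(1,2)])
  show "\<forall>x\<in>\<Omega>. \<bar>(\<Sum>E\<in>F1. c1 E * indicator E x) - (\<Sum>E\<in>F2. c2 E * indicator E x)\<bar> \<le> \<delta>1 + \<delta>2"
  proof
    fix x assume "x \<in> \<Omega>"
    then have "\<bar>f x - (\<Sum>E\<in>F1. c1 E * indicator E x)\<bar> < \<delta>1"
      "\<bar>f x - (\<Sum>E\<in>F2. c2 E * indicator E x)\<bar> < \<delta>2"
      using approx1 approx2 by (auto simp: simple_approx_def)
    then show "\<bar>(\<Sum>E\<in>F1. c1 E * indicator E x) - (\<Sum>E\<in>F2. c2 E * indicator E x)\<bar> \<le> \<delta>1 + \<delta>2"
      by linarith
  qed
qed (use approx1 approx2 in \<open>auto simp: simple_approx_def\<close>)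

text \<open>The intervals of radius \<delta> around the integrals of \<delta>-approximating simple functions
  pairwise intersect, so the supremum of their lower ends lies in all of them.\<close>
lemma simple_approx_limit_exists:
  assumes fld: "is_field \<Omega> A" and P: "P \<in> pba \<Omega> A" and f: "f \<in> Bfun \<Omega> A"
  shows "\<exists>r. \<forall>F c \<delta>. simple_approx \<Omega> A f F c \<delta> \<longrightarrow> \<bar>(\<Sum>E\<in>F. c E * P E) - r\<bar> \<le> \<delta>"
proof -
  define L where "L = {(\<Sum>E\<in>F. c E * P E) - \<delta> | F c \<delta>. simple_approx \<Omega> A f F c \<delta>}"
  have L_le: "y \<le> (\<Sum>E\<in>F. c E * P E) + \<delta>" if "y \<in> L" "simple_approx \<Omega> A f F c \<delta>" for y F c \<delta>
  proof -
    obtain F' c' \<delta>' where "simple_approx \<Omega> A f F' c' \<delta>'" "y = (\<Sum>E\<in>F'. c' E * P E) - \<delta>'"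
      using \<open>y \<in> L\<close> unfolding L_def by blast
    then show ?thesis
      using simple_approx_sums_close[OF fld P _ that(2)] by fastforce
  qed
  obtain F0 c0 where "simple_approx \<Omega> A f F0 c0 1"
    using Bfun_simple_approx[OF f] by fastforce
  then have L: "L \<noteq> {}" "bdd_above L"
    using L_le unfolding L_def bdd_above_def by blast+
  have "\<bar>(\<Sum>E\<in>F. c E * P E) - Sup L\<bar> \<le> \<delta>" if approx: "simple_approx \<Omega> A f F c \<delta>" for F c \<delta>
  proof -
    have "(\<Sum>E\<in>F. c E * P E) - \<delta> \<le> Sup L"
      using approx L(2) unfolding L_def by (blast intro: cSup_upper)
    moreover have "Sup L \<le> (\<Sum>E\<in>F. c E * P E) + \<delta>"
      using L(1) L_le[OF _ approx] by (rule cSup_least)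
    ultimately show ?thesis
      by linarith
  qed
  then show ?thesis
    by blast
qed

lemma fa_integral_eq_simple_approx_limit:
  "fa_integral \<Omega> A \<mu> f = (THE r. \<forall>\<epsilon>>0. \<exists>\<delta>>0. \<forall>F c. simple_approx \<Omega> A f F c \<delta> \<longrightarrow>
     \<bar>(\<Sum>E\<in>F. c E * \<mu> E) - r\<bar> < \<epsilon>)"
  by (simp add: fa_integral_def simple_approx_def)

lemma fa_integral_eqI:
  assumes f: "f \<in> Bfun \<Omega> A"
    and r: "\<And>F c \<delta>. simple_approx \<Omega> A f F c \<delta> \<Longrightarrow> \<bar>(\<Sum>E\<in>F. c E * \<mu> E) - r\<bar> \<le> \<delta>"
  shows "fa_integral \<Omega> A \<mu> f = r"
  unfolding fa_integral_eq_simple_approx_limit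
proof (rule the_equality)
  show "\<forall>\<epsilon>>0. \<exists>\<delta>>0. \<forall>F c. simple_approx \<Omega> A f F c \<delta> \<longrightarrow> \<bar>(\<Sum>E\<in>F. c E * \<mu> E) - r\<bar> < \<epsilon>"
  proof (intro allI impI)
    fix \<epsilon> :: real assume "\<epsilon> > 0"
    then have "\<bar>(\<Sum>E\<in>F. c E * \<mu> E) - r\<bar> < \<epsilon>" if "simple_approx \<Omega> A f F c (\<epsilon> / 2)" for F c
      using r[OF that] by linarith
    then show "\<exists>\<delta>>0. \<forall>F c. simple_approx \<Omega> A f F c \<delta> \<longrightarrow> \<bar>(\<Sum>E\<in>F. c E * \<mu> E) - r\<bar> < \<epsilon>"
      using \<open>\<epsilon> > 0\<close> by (intro exI[of _ "\<epsilon> / 2"]) auto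
  qed
next
  fix r' assume r': "\<forall>\<epsilon>>0. \<exists>\<delta>>0. \<forall>F c. simple_approx \<Omega> A f F c \<delta> \<longrightarrow>
    \<bar>(\<Sum>E\<in>F. c E * \<mu> E) - r'\<bar> < \<epsilon>"
  have close: "\<bar>r' - r\<bar> \<le> 2 * \<epsilon>" if "\<epsilon> > 0" for \<epsilon>
  proof -
    obtain \<delta> where "\<delta> > 0"
      and \<delta>: "\<And>F c. simple_approx \<Omega> A f F c \<delta> \<Longrightarrow> \<bar>(\<Sum>E\<in>F. c E * \<mu> E) - r'\<bar> < \<epsilon>"
      using r' \<open>\<epsilon> > 0\<close> by blast
    obtain F c where approx: "simple_approx \<Omega> A f F c (min \<delta> \<epsilon>)"
      using Bfun_simple_approx[OF f, of "min \<delta> \<epsilon>"] \<open>\<delta> > 0\<close> \<open>\<epsilon> > 0\<close> by auto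
    then have "simple_approx \<Omega> A f F c \<delta>" "simple_approx \<Omega> A f F c \<epsilon>"
      by (auto simp: simple_approx_def)
    then have "\<bar>(\<Sum>E\<in>F. c E * \<mu> E) - r'\<bar> < \<epsilon>" "\<bar>(\<Sum>E\<in>F. c E * \<mu> E) - r\<bar> \<le> \<epsilon>"
      using \<delta> r by auto
    then show ?thesis
      by linarith
  qed
  have "\<bar>r' - r\<bar> \<le> 0"
  proof (rule field_le_epsilon)
    fix e :: real assume "e > 0"
    then show "\<bar>r' - r\<bar> \<le> 0 + e"
      using close[of "e / 2"] by simp
  qed
  then show "r' = r"
    by simp
qed

lemma fa_integral_simple_approx:
  assumes fld: "is_field \<Omega> A" and P: "P \<in> pba \<Omega> A" and f: "f \<in> Bfun \<Omega> A"
    and approx: "simple_approx \<Omega> A f F c \<delta>"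
  shows "\<bar>(\<Sum>E\<in>F. c E * P E) - fa_integral \<Omega> A P f\<bar> \<le> \<delta>"
proof -
  obtain r where r: "\<And>F c \<delta>. simple_approx \<Omega> A f F c \<delta> \<Longrightarrow> \<bar>(\<Sum>E\<in>F. c E * P E) - r\<bar> \<le> \<delta>"
    using simple_approx_limit_exists[OF fld P f] by blast
  then show ?thesis
    using r[OF approx] fa_integral_eqI[OF f r] by simp
qed

lemma indicator_in_Bfun: "G \<in> A \<Longrightarrow> indicator G \<in> Bfun \<Omega> A"
  unfolding Bfun_def by (auto intro!: exI[of _ "{G}"] exI[of _ "\<lambda>_. 1"])

lemma fa_integral_indicator:
  assumes "is_field \<Omega> A" "P \<in> pba \<Omega> A" "G \<in> A"
  shows "fa_integral \<Omega> A P (indicator G) = P G"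
proof -
  have "\<bar>P G - fa_integral \<Omega> A P (indicator G)\<bar> \<le> 0 + \<delta>" if "\<delta> > 0" for \<delta>
    using fa_integral_simple_approx[OF assms(1,2) indicator_in_Bfun[OF assms(3)], of "{G}" "\<lambda>_. 1" \<delta>]
      that assms(3) by (simp add: simple_approx_def)
  then have "\<bar>P G - fa_integral \<Omega> A P (indicator G)\<bar> \<le> 0"
    by (rule field_le_epsilon)
  then show ?thesis
    by simp
qed

section \<open>The weak* topology on probability charges\<close>

definition weak_star_subbasis :: "'a set \<Rightarrow> 'a set set \<Rightarrow> ('a set \<Rightarrow> real) set set" where
  "weak_star_subbasis \<Omega> A =
     {{\<mu> \<in> bfa \<Omega> A. fa_integral \<Omega> A \<mu> f \<in> U} | f U. f \<in> Bfun \<Omega> A \<and> open U}"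

lemma weak_star_eq_generated:
  "weak_star \<Omega> A = subtopology (topology_generated_by (weak_star_subbasis \<Omega> A)) (bfa \<Omega> A)"
  by (simp add: weak_star_def weak_star_subbasis_def)

lemma bfa_in_weak_star_subbasis: "bfa \<Omega> A \<in> weak_star_subbasis \<Omega> A"
proof -
  have "(\<lambda>_. 0) \<in> Bfun \<Omega> A"
    unfolding Bfun_def by (auto intro!: exI[of _ "{}"])
  then show ?thesis
    unfolding weak_star_subbasis_def by (intro CollectI exI[of _ "\<lambda>_. 0"] exI[of _ UNIV]) auto
qed

lemma topspace_weak_star: "topspace (weak_star \<Omega> A) = bfa \<Omega> A"
  using bfa_in_weak_star_subbasis[of \<Omega> A]
  by (auto simp: weak_star_eq_generated topspace_subtopology)

lemma openin_weak_star_subbasis: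
  assumes "S \<in> weak_star_subbasis \<Omega> A"
  shows "openin (weak_star \<Omega> A) S"
proof -
  have "openin (topology_generated_by (weak_star_subbasis \<Omega> A)) S"
    using assms by (simp add: openin_topology_generated_by_iff generate_topology_on.Basis)
  then have "openin (weak_star \<Omega> A) (bfa \<Omega> A \<inter> S)"
    unfolding weak_star_eq_generated by (rule openin_subtopology_Int2)
  moreover have "bfa \<Omega> A \<inter> S = S"
    using assms unfolding weak_star_subbasis_def by blast
  ultimately show ?thesis
    by simp
qed

lemma openin_weak_star_tests:
  assumes "finite Gs" "Gs \<subseteq> A"
  shows "openin (weak_star \<Omega> A)
    {\<mu> \<in> bfa \<Omega> A. \<forall>G\<in>Gs. fa_integral \<Omega> A \<mu> (indicator G) \<in> ball (y G) \<epsilon>}"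
proof -
  have "{\<mu> \<in> bfa \<Omega> A. fa_integral \<Omega> A \<mu> (indicator G) \<in> ball (y G) \<epsilon>} \<in> weak_star_subbasis \<Omega> A"
    if "G \<in> Gs" for G
    unfolding weak_star_subbasis_def using that assms(2) indicator_in_Bfun by blast
  then have "openin (weak_star \<Omega> A) ((\<Inter>G\<in>Gs.
      {\<mu> \<in> bfa \<Omega> A. fa_integral \<Omega> A \<mu> (indicator G) \<in> ball (y G) \<epsilon>}) \<inter> topspace (weak_star \<Omega> A))"
    using assms(1) by (intro openin_INT openin_weak_star_subbasis)
  moreover have "(\<Inter>G\<in>Gs. {\<mu> \<in> bfa \<Omega> A. fa_integral \<Omega> A \<mu> (indicator G) \<in> ball (y G) \<epsilon>})
      \<inter> topspace (weak_star \<Omega> A) =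
      {\<mu> \<in> bfa \<Omega> A. \<forall>G\<in>Gs. fa_integral \<Omega> A \<mu> (indicator G) \<in> ball (y G) \<epsilon>}"
    by (auto simp: topspace_weak_star)
  ultimately show ?thesis
    by simp
qed

lemma sum_mult_diff_le:
  fixes c x y :: "'b \<Rightarrow> real"
  assumes "\<forall>E\<in>F. \<bar>x E - y E\<bar> \<le> \<epsilon>"
  shows "\<bar>(\<Sum>E\<in>F. c E * x E) - (\<Sum>E\<in>F. c E * y E)\<bar> \<le> (\<Sum>E\<in>F. \<bar>c E\<bar>) * \<epsilon>"
proof -
  have "\<bar>(\<Sum>E\<in>F. c E * x E) - (\<Sum>E\<in>F. c E * y E)\<bar> = \<bar>\<Sum>E\<in>F. c E * (x E - y E)\<bar>"
    by (simp add: sum_subtractf right_diff_distrib)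
  also have "\<dots> \<le> (\<Sum>E\<in>F. \<bar>c E * (x E - y E)\<bar>)"
    by (rule sum_abs)
  also have "\<dots> = (\<Sum>E\<in>F. \<bar>c E\<bar> * \<bar>x E - y E\<bar>)"
    by (simp add: abs_mult)
  also have "\<dots> \<le> (\<Sum>E\<in>F. \<bar>c E\<bar> * \<epsilon>)"
    using assms by (intro sum_mono mult_left_mono) auto
  finally show ?thesis
    by (simp add: sum_distrib_right)
qed

definition has_event_nbhd :: "'a set \<Rightarrow> 'a set set \<Rightarrow> ('a set \<Rightarrow> real) \<Rightarrow> ('a set \<Rightarrow> real) set \<Rightarrow> bool" where
  "has_event_nbhd \<Omega> A Q W \<longleftrightarrow> (\<exists>Gs \<epsilon>. finite Gs \<and> Gs \<subseteq> A \<and> 0 < \<epsilon> \<and>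
     {\<mu> \<in> pba \<Omega> A. \<forall>G\<in>Gs. \<bar>\<mu> G - Q G\<bar> < \<epsilon>} \<subseteq> W)"

lemma has_event_nbhd_mono: "has_event_nbhd \<Omega> A Q W \<Longrightarrow> W \<subseteq> W' \<Longrightarrow> has_event_nbhd \<Omega> A Q W'"
  unfolding has_event_nbhd_def by blast

lemma has_event_nbhd_Int:
  assumes "has_event_nbhd \<Omega> A Q W1" "has_event_nbhd \<Omega> A Q W2"
  shows "has_event_nbhd \<Omega> A Q (W1 \<inter> W2)"
proof -
  obtain Gs1 \<epsilon>1 Gs2 \<epsilon>2 where "finite Gs1" "Gs1 \<subseteq> A" "0 < \<epsilon>1" "finite Gs2" "Gs2 \<subseteq> A" "0 < \<epsilon>2"
    and W: "{\<mu> \<in> pba \<Omega> A. \<forall>G\<in>Gs1. \<bar>\<mu> G - Q G\<bar> < \<epsilon>1} \<subseteq> W1"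
      "{\<mu> \<in> pba \<Omega> A. \<forall>G\<in>Gs2. \<bar>\<mu> G - Q G\<bar> < \<epsilon>2} \<subseteq> W2"
    using assms unfolding has_event_nbhd_def by blast
  moreover have "{\<mu> \<in> pba \<Omega> A. \<forall>G\<in>Gs1 \<union> Gs2. \<bar>\<mu> G - Q G\<bar> < min \<epsilon>1 \<epsilon>2} \<subseteq> W1 \<inter> W2"
    using W by auto
  ultimately show ?thesis
    unfolding has_event_nbhd_def by (intro exI[of _ "Gs1 \<union> Gs2"] exI[of _ "min \<epsilon>1 \<epsilon>2"]) simp
qed

text \<open>A subbasic set is controlled through a simple function approximating its integrand.\<close>
lemma has_event_nbhd_subbasis:
  assumes fld: "is_field \<Omega> A" and S: "S \<in> weak_star_subbasis \<Omega> A" and Q: "Q \<in> S" "Q \<in> pba \<Omega> A"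
  shows "has_event_nbhd \<Omega> A Q S"
proof -
  obtain f U where S_eq: "S = {\<mu> \<in> bfa \<Omega> A. fa_integral \<Omega> A \<mu> f \<in> U}"
    and f: "f \<in> Bfun \<Omega> A" and "open U"
    using S unfolding weak_star_subbasis_def by blast
  then obtain r where "r > 0" and r: "ball (fa_integral \<Omega> A Q f) r \<subseteq> U"
    using Q(1) open_contains_ball by blast
  define \<delta> where "\<delta> = r / 4"
  obtain F c where approx: "simple_approx \<Omega> A f F c \<delta>"
    using Bfun_simple_approx[OF f, of \<delta>] \<open>r > 0\<close> by (auto simp: \<delta>_def)
  define C where "C = (\<Sum>E\<in>F. \<bar>c E\<bar>)"
  define \<epsilon> where "\<epsilon> = \<delta> / (C + 1)"
  have "C \<ge> 0" "\<delta> > 0"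
    using \<open>r > 0\<close> by (simp_all add: C_def sum_nonneg \<delta>_def)
  then have "\<epsilon> > 0"
    by (simp add: \<epsilon>_def)
  have "C * \<epsilon> = \<delta> * (C / (C + 1))"
    by (simp add: \<epsilon>_def)
  also have "\<dots> \<le> \<delta> * 1"
    using \<open>C \<ge> 0\<close> \<open>\<delta> > 0\<close> by (intro mult_left_mono) auto
  finally have "C * \<epsilon> \<le> \<delta>"
    by simp
  have "\<mu> \<in> S" if "\<mu> \<in> pba \<Omega> A" "\<forall>G\<in>F. \<bar>\<mu> G - Q G\<bar> < \<epsilon>" for \<mu>
  proof -
    have "\<bar>(\<Sum>E\<in>F. c E * \<mu> E) - (\<Sum>E\<in>F. c E * Q E)\<bar> \<le> C * \<epsilon>"
      unfolding C_def using that(2) by (intro sum_mult_diff_le) (simp add: less_imp_le)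
    moreover have "\<bar>(\<Sum>E\<in>F. c E * \<mu> E) - fa_integral \<Omega> A \<mu> f\<bar> \<le> \<delta>"
      "\<bar>(\<Sum>E\<in>F. c E * Q E) - fa_integral \<Omega> A Q f\<bar> \<le> \<delta>"
      using fa_integral_simple_approx[OF fld _ f approx] that(1) Q(2) by auto
    ultimately have "fa_integral \<Omega> A \<mu> f \<in> ball (fa_integral \<Omega> A Q f) r"
      using \<open>C * \<epsilon> \<le> \<delta>\<close> \<open>r > 0\<close> unfolding mem_ball dist_real_def \<delta>_def by linarith
    then show ?thesis
      using r S_eq pba_in_bfa[OF fld that(1)] by auto
  qed
  then show ?thesis
    using approx \<open>\<epsilon> > 0\<close> unfolding has_event_nbhd_def simple_approx_def by blast
qed

lemma has_event_nbhd_generated: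
  assumes fld: "is_field \<Omega> A" and W: "generate_topology_on (weak_star_subbasis \<Omega> A) W"
    and "Q \<in> W" "Q \<in> pba \<Omega> A"
  shows "has_event_nbhd \<Omega> A Q W"
  using W assms(3)
proof (induction rule: generate_topology_on.induct)
  case Empty
  then show ?case
    by simp
next
  case (Int W1 W2)
  then show ?case
    using has_event_nbhd_Int by blast
next
  case (UN K)
  then obtain W where "W \<in> K" "Q \<in> W"
    by blast
  then show ?case
    using UN.IH has_event_nbhd_mono[of \<Omega> A Q W "\<Union>K"] by blast
next
  case (Basis S)
  then show ?case
    using has_event_nbhd_subbasis[OF fld _ _ assms(4)] by blast
qed

definition pointwise_adherent :: "'b set \<Rightarrow> ('b \<Rightarrow> real) set \<Rightarrow> ('b \<Rightarrow> real) \<Rightarrow> bool" where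
  "pointwise_adherent A C P \<longleftrightarrow>
     (\<forall>Gs \<epsilon>. finite Gs \<and> Gs \<subseteq> A \<and> 0 < \<epsilon> \<longrightarrow> (\<exists>R\<in>C. \<forall>G\<in>Gs. \<bar>R G - P G\<bar> < \<epsilon>))"

lemma pointwise_adherent_if_weak_star_closure:
  assumes fld: "is_field \<Omega> A" and C: "C \<subseteq> pba \<Omega> A" and P: "P \<in> pba \<Omega> A"
    and closure: "P \<in> weak_star \<Omega> A closure_of C"
  shows "pointwise_adherent A C P"
  unfolding pointwise_adherent_def
proof (intro allI impI)
  fix Gs and \<epsilon> :: real assume Gs: "finite Gs \<and> Gs \<subseteq> A \<and> 0 < \<epsilon>"
  let ?T = "{\<mu> \<in> bfa \<Omega> A. \<forall>G\<in>Gs. fa_integral \<Omega> A \<mu> (indicator G) \<in> ball (P G) \<epsilon>}"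
  have "fa_integral \<Omega> A P (indicator G) = P G" if "G \<in> Gs" for G
    using Gs that by (intro fa_integral_indicator[OF fld P]) auto
  then have "P \<in> ?T"
    using Gs pba_in_bfa[OF fld P] by simp
  moreover have "openin (weak_star \<Omega> A) ?T"
    using Gs by (intro openin_weak_star_tests) auto
  ultimately obtain R where "R \<in> C" "R \<in> ?T"
    using closure unfolding in_closure_of by (meson conjI)
  moreover have "fa_integral \<Omega> A R (indicator G) = R G" if "G \<in> Gs" for G
    using C \<open>R \<in> C\<close> Gs that by (intro fa_integral_indicator[OF fld]) auto
  ultimately have "\<forall>G\<in>Gs. \<bar>R G - P G\<bar> < \<epsilon>"
    by (simp add: dist_real_def abs_minus_commute)
  then show "\<exists>R\<in>C. \<forall>G\<in>Gs. \<bar>R G - P G\<bar> < \<epsilon>"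
    using \<open>R \<in> C\<close> by blast
qed

lemma weak_star_closure_if_pointwise_adherent:
  assumes fld: "is_field \<Omega> A" and C: "C \<subseteq> pba \<Omega> A" and P: "P \<in> pba \<Omega> A"
    and adherent: "pointwise_adherent A C P"
  shows "P \<in> weak_star \<Omega> A closure_of C"
  unfolding in_closure_of topspace_weak_star
proof (intro conjI allI impI)
  show "P \<in> bfa \<Omega> A"
    using pba_in_bfa[OF fld P] .
  fix T assume "P \<in> T \<and> openin (weak_star \<Omega> A) T"
  then have "P \<in> T" "openin (subtopology (topology_generated_by (weak_star_subbasis \<Omega> A)) (bfa \<Omega> A)) T"
    by (simp_all add: weak_star_eq_generated)
  then obtain W where W: "openin (topology_generated_by (weak_star_subbasis \<Omega> A)) W"
    "T = W \<inter> bfa \<Omega> A"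
    unfolding openin_subtopology by blast
  then have W_gen: "generate_topology_on (weak_star_subbasis \<Omega> A) W" and "P \<in> W"
    using \<open>P \<in> T\<close> by (simp_all add: openin_topology_generated_by_iff)
  obtain Gs \<epsilon> where Gs: "finite Gs \<and> Gs \<subseteq> A \<and> 0 < \<epsilon>"
    and nbhd: "{\<mu> \<in> pba \<Omega> A. \<forall>G\<in>Gs. \<bar>\<mu> G - P G\<bar> < \<epsilon>} \<subseteq> W"
    using has_event_nbhd_generated[OF fld W_gen \<open>P \<in> W\<close> P] unfolding has_event_nbhd_def by blast
  obtain R where "R \<in> C" and close: "\<forall>G\<in>Gs. \<bar>R G - P G\<bar> < \<epsilon>"
    using adherent[unfolded pointwise_adherent_def, rule_format, OF Gs] by blast
  then have "R \<in> pba \<Omega> A"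
    using C by blast
  then have "R \<in> W"
    using nbhd close by blast
  then show "\<exists>R. R \<in> C \<and> R \<in> T"
    using \<open>R \<in> C\<close> \<open>R \<in> pba \<Omega> A\<close> W(2) pba_in_bfa[OF fld] by blast
qed

lemma weak_star_closure_iff_pointwise_adherent:
  assumes "is_field \<Omega> A" "C \<subseteq> pba \<Omega> A" "P \<in> pba \<Omega> A"
  shows "P \<in> weak_star \<Omega> A closure_of C \<longleftrightarrow> pointwise_adherent A C P"
  using pointwise_adherent_if_weak_star_closure[OF assms] weak_star_closure_if_pointwise_adherent[OF assms]
  by blast

section \<open>Pointwise convergence of set functions\<close>

lemma closed_pba: "closed (pba \<Omega> A)"
proof -
  have "pba \<Omega> A = (\<Inter>E\<in>A. \<Inter>F\<in>{F \<in> A. E \<inter> F = {}}. {P. P (E \<union> F) = P E + P F})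
      \<inter> (\<Inter>E\<in>A. {P. 0 \<le> P E}) \<inter> {P. P \<Omega> = 1}"
    by (auto simp: pba_def)
  also have "closed \<dots>"
    by (intro closed_Int closed_INT ballI closed_Collect_eq closed_Collect_le
        continuous_intros continuous_on_product_coordinates)
  finally show ?thesis .
qed

lemma closed_pointwise_adherent: "closed {P. pointwise_adherent A C P}"
  unfolding closed_def open_subopen[of "- _"]
proof
  fix Q assume "Q \<in> - {P. pointwise_adherent A C P}"
  then obtain Gs \<epsilon> where Gs: "finite Gs" "Gs \<subseteq> A" "0 < \<epsilon>"
    and far: "\<forall>R\<in>C. \<exists>G\<in>Gs. \<epsilon> \<le> \<bar>R G - Q G\<bar>"
    unfolding pointwise_adherent_def by (auto simp: not_less)
  let ?N = "{P. \<forall>G\<in>Gs. P G \<in> ball (Q G) (\<epsilon> / 2)}"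
  have "open ?N"
    using product_topology_basis'[of Gs "\<lambda>G. ball (Q G) (\<epsilon> / 2)" "\<lambda>G. G"] Gs(1) by simp
  moreover have "Q \<in> ?N"
    using Gs(3) by simp
  moreover have "\<not> pointwise_adherent A C P" if "P \<in> ?N" for P
  proof
    assume "pointwise_adherent A C P"
    then obtain R where "R \<in> C" and R: "\<forall>G\<in>Gs. \<bar>R G - P G\<bar> < \<epsilon> / 2"
      using Gs unfolding pointwise_adherent_def by (meson half_gt_zero)
    then obtain G where "G \<in> Gs" "\<epsilon> \<le> \<bar>R G - Q G\<bar>"
      using far by blast
    moreover have "\<bar>P G - Q G\<bar> < \<epsilon> / 2"
      using that \<open>G \<in> Gs\<close> by (simp add: dist_real_def abs_minus_commute)
    moreover have "\<bar>R G - P G\<bar> < \<epsilon> / 2"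
      using R \<open>G \<in> Gs\<close> by blast
    ultimately show False
      by linarith
  qed
  ultimately show "\<exists>T. open T \<and> Q \<in> T \<and> T \<subseteq> - {P. pointwise_adherent A C P}"
    by (intro exI[of _ ?N]) blast
qed

lemma compact_unit_valued: "compact (Pi\<^sub>E UNIV (\<lambda>_::'b. {0..1::real}))"
  using compactin_PiE[of "\<lambda>_. euclideanreal" UNIV "\<lambda>_::'b. {0..1::real}"]
  by (simp add: euclidean_product_topology)

lemma pointwise_adherent_le:
  assumes adh: "pointwise_adherent A C P" and "X \<in> A" and le: "\<And>R. R \<in> C \<Longrightarrow> R X \<le> b"
  shows "P X \<le> b"
proof (rule field_le_epsilon)
  fix e :: real assume "0 < e"
  then obtain R where "R \<in> C" "\<bar>R X - P X\<bar> < e"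
    using adh[unfolded pointwise_adherent_def, rule_format, of "{X}" e] \<open>X \<in> A\<close> by auto
  then show "P X \<le> b + e"
    using le by fastforce
qed

section \<open>Conditioning\<close>

lemma quotient_perturbation_le:
  fixes x y a p \<eta> :: real
  assumes p: "0 < p" and x: "\<bar>x - a\<bar> \<le> \<eta>" and y: "\<bar>y - p\<bar> \<le> \<eta>" and a: "0 \<le> a" "a \<le> p"
    and \<eta>: "\<eta> \<le> p / 2"
  shows "\<bar>x / y - a / p\<bar> \<le> 4 * \<eta> / p"
proof -
  have "y \<ge> p / 2"
    using y \<eta> by linarith
  then have "y > 0"
    using p by linarith
  have "\<bar>a * (y - p)\<bar> \<le> p * \<eta>"
    using a y by (simp add: abs_mult mult_mono)
  moreover have "\<bar>p * (x - a)\<bar> \<le> p * \<eta>"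
    using p x by (simp add: abs_mult)
  ultimately have num: "\<bar>p * (x - a) - a * (y - p)\<bar> \<le> 2 * p * \<eta>"
    by linarith
  have "\<bar>x / y - a / p\<bar> = \<bar>p * (x - a) - a * (y - p)\<bar> / (y * p)"
    using \<open>y > 0\<close> p by (simp add: field_simps abs_div)
  also have "\<dots> \<le> 2 * p * \<eta> / (y * p)"
    using num \<open>y > 0\<close> p by (intro divide_right_mono) auto
  also have "\<dots> = 2 * \<eta> / y"
    using p by simp
  also have "\<dots> \<le> 2 * \<eta> / (p / 2)"
    using \<open>y \<ge> p / 2\<close> p x by (intro divide_left_mono) auto
  finally show ?thesis
    by simp
qed

lemma pba_conditional_perturbation_le:
  assumes fld: "is_field \<Omega> A" and P: "P \<in> pba \<Omega> A" and sets: "G \<in> A" "E \<in> A" "U \<in> A" "E \<subseteq> U"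
    and "P (U - E) \<le> \<kappa>" "0 < P E" "4 * \<kappa> \<le> P E"
    and "\<bar>x - P (G \<inter> U)\<bar> < \<kappa>" "\<bar>y - P U\<bar> < \<kappa>"
  shows "\<bar>x / y - P (G \<inter> E) / P E\<bar> \<le> 8 * \<kappa> / P E"
proof -
  have "P (G \<inter> E) \<le> P (G \<inter> U)" "P (G \<inter> U) \<le> P (G \<inter> E) + P (U - E)"
    using pba_Int_superset_le[OF fld P sets] by simp_all
  moreover have "P E \<le> P U" "P U \<le> P E + P (U - E)"
    using pba_Int_superset_le[OF fld P field_space[OF fld] sets(2-)]
      field_subset[OF fld sets(2)] field_subset[OF fld sets(3)] by (simp_all add: Int_absorb1)
  moreover have "0 \<le> P (G \<inter> E)" "P (G \<inter> E) \<le> P E"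
    using sets by (auto intro!: pba_nonneg[OF P] pba_mono[OF fld P] field_Int[OF fld])
  ultimately have "\<bar>x / y - P (G \<inter> E) / P E\<bar> \<le> 4 * (2 * \<kappa>) / P E"
    using assms(7-) by (intro quotient_perturbation_le) auto
  then show ?thesis
    by simp
qed

text \<open>Set to 0 off the field, so that conditional probabilities lie in the cube [0,1]^UNIV.\<close>
definition conditional :: "'a set set \<Rightarrow> ('a set \<Rightarrow> real) \<Rightarrow> 'a set \<Rightarrow> 'a set \<Rightarrow> real" where
  "conditional A P E = (\<lambda>X. if X \<in> A then P (X \<inter> E) / P E else 0)"

lemma conditional_self: "E \<in> A \<Longrightarrow> 0 < P E \<Longrightarrow> conditional A P E E = 1"
  by (simp add: conditional_def)

lemma conditional_pba:
  assumes fld: "is_field \<Omega> A" and P: "P \<in> pba \<Omega> A" and E: "E \<in> A" "0 < P E"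
  shows "conditional A P E \<in> pba \<Omega> A"
  unfolding pba_def mem_Collect_eq
proof (intro conjI ballI impI)
  fix F1 F2 assume F: "F1 \<in> A" "F2 \<in> A" "F1 \<inter> F2 = {}"
  have "P ((F1 \<inter> E) \<union> (F2 \<inter> E)) = P (F1 \<inter> E) + P (F2 \<inter> E)"
    using F E by (intro pba_additive[OF P] field_Int[OF fld]) auto
  moreover have "(F1 \<union> F2) \<inter> E = (F1 \<inter> E) \<union> (F2 \<inter> E)"
    by blast
  ultimately show "conditional A P E (F1 \<union> F2) = conditional A P E F1 + conditional A P E F2"
    using F field_Un[OF fld] by (simp add: conditional_def add_divide_distrib)
next
  fix F assume "F \<in> A"
  then show "0 \<le> conditional A P E F"
    using pba_nonneg[OF P field_Int[OF fld _ E(1)]] E by (simp add: conditional_def)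
next
  show "conditional A P E \<Omega> = 1"
    using field_space[OF fld] field_subset[OF fld E(1)] E by (simp add: conditional_def Int_absorb1)
qed

lemma conditional_unit_valued:
  assumes fld: "is_field \<Omega> A" and P: "P \<in> pba \<Omega> A" and E: "E \<in> A" "0 < P E"
  shows "conditional A P E \<in> Pi\<^sub>E UNIV (\<lambda>_. {0..1})"
proof -
  have "conditional A P E X \<in> {0..1}" for X
  proof (cases "X \<in> A")
    case True
    then have "0 \<le> P (X \<inter> E)" "P (X \<inter> E) \<le> P E"
      using E by (auto intro!: pba_nonneg[OF P] pba_mono[OF fld P] field_Int[OF fld])
    then show ?thesis
      using True E by (simp add: conditional_def)
  qed (simp add: conditional_def)
  then show ?thesis
    by (simp add: PiE_iff)
qed

section \<open>Type spaces\<close>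

lemma type_conv_le:
  assumes "R \<in> type_conv \<Omega> ti" "\<And>\<omega>. \<omega> \<in> \<Omega> \<Longrightarrow> ti \<omega> X \<le> b"
  shows "R X \<le> b"
proof -
  obtain W a where W: "W \<subseteq> \<Omega>" "\<forall>\<omega>\<in>W. 0 \<le> a \<omega>" "(\<Sum>\<omega>\<in>W. a \<omega>) = 1"
    and R: "R = (\<lambda>E. \<Sum>\<omega>\<in>W. a \<omega> * ti \<omega> E)"
    using assms(1) unfolding type_conv_def by blast
  have "R X \<le> (\<Sum>\<omega>\<in>W. a \<omega> * b)"
    unfolding R using W assms(2) by (intro sum_mono mult_left_mono) auto
  also have "\<dots> = b"
    using W(3) by (simp add: sum_distrib_right[symmetric])
  finally show ?thesis .
qed

lemma consistent_on_imp_positive: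
  assumes "consistent_on \<Omega> A t I E" "E \<in> A"
  shows "\<exists>P\<in>pba \<Omega> A. (\<forall>i\<in>I. P \<in> Pi_set \<Omega> A t i) \<and> 0 < P E"
proof -
  obtain P where P: "P \<in> pba \<Omega> A" "\<forall>i\<in>I. P \<in> Pi_set \<Omega> A t i"
    and pos: "0 < Inf {P F | F. F \<in> A \<and> E \<subseteq> F}"
    using assms(1) unfolding consistent_on_def by blast
  have "bdd_below {P F | F. F \<in> A \<and> E \<subseteq> F}"
    using pba_nonneg[OF P(1)] by (intro bdd_belowI[of _ 0]) blast
  then have "Inf {P F | F. F \<in> A \<and> E \<subseteq> F} \<le> P E"
    using assms(2) by (intro cInf_lower) blast
  then show ?thesis
    using P pos by force
qed

lemma consistent_onI:
  assumes fld: "is_field \<Omega> A" and P: "P \<in> pba \<Omega> A" "\<forall>i\<in>I. P \<in> Pi_set \<Omega> A t i"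
    and E: "E \<in> A" "E \<subseteq> S" "0 < P E" and "S \<subseteq> \<Omega>"
  shows "consistent_on \<Omega> A t I S"
proof -
  have "{P F | F. F \<in> A \<and> S \<subseteq> F} \<noteq> {}"
    using field_space[OF fld] \<open>S \<subseteq> \<Omega>\<close> by blast
  moreover have "P E \<le> P F" if "F \<in> A" "S \<subseteq> F" for F
    using that E by (intro pba_mono[OF fld P(1)]) auto
  ultimately have "P E \<le> Inf {P F | F. F \<in> A \<and> S \<subseteq> F}"
    by (intro cInf_greatest) auto
  then show ?thesis
    unfolding consistent_on_def using P E(3) by force
qed

context
  fixes \<Omega> :: "'a set" and A :: "'a set set" and N :: "'i set"
    and M :: "'i \<Rightarrow> 'a set set" and t :: "'i \<Rightarrow> 'a \<Rightarrow> 'a set \<Rightarrow> real"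
  assumes ts: "type_space \<Omega> A N M t"
begin

lemma type_space_field: "is_field \<Omega> A"
  using ts by (simp add: type_space_def)

lemma knowledge_field: "i \<in> N \<Longrightarrow> is_field \<Omega> (M i)"
  using ts by (simp add: type_space_def)

lemma knowledge_subset: "i \<in> N \<Longrightarrow> M i \<subseteq> A"
  using ts by (simp add: type_space_def)

lemma type_pba: "i \<in> N \<Longrightarrow> \<omega> \<in> \<Omega> \<Longrightarrow> t i \<omega> \<in> pba \<Omega> A"
  using ts by (simp add: type_space_def)

lemma type_in_Bfun: "i \<in> N \<Longrightarrow> E \<in> A \<Longrightarrow> (\<lambda>\<omega>. t i \<omega> E) \<in> Bfun \<Omega> (M i)"
  using ts by (simp add: type_space_def)

lemma type_known_event: "i \<in> N \<Longrightarrow> F \<in> M i \<Longrightarrow> \<omega> \<in> F \<Longrightarrow> t i \<omega> F = 1"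
  using ts by (simp add: type_space_def)

lemma type_known_event_compl:
  assumes i: "i \<in> N" and F: "F \<in> M i" and \<omega>: "\<omega> \<in> \<Omega> - F"
  shows "t i \<omega> F = 0"
proof -
  have "t i \<omega> (\<Omega> - F) = 1"
    using \<omega> field_compl[OF knowledge_field[OF i] F] by (intro type_known_event[OF i]) auto
  moreover have "t i \<omega> (\<Omega> - F) = 1 - t i \<omega> F"
    using F knowledge_subset[OF i] \<omega> by (intro pba_compl[OF type_space_field type_pba[OF i]]) auto
  ultimately show ?thesis
    by simp
qed

lemma type_Int_known_event:
  assumes i: "i \<in> N" and U: "U \<in> M i" and G: "G \<in> A" and \<omega>: "\<omega> \<in> \<Omega>"
  shows "t i \<omega> (G \<inter> U) = (if \<omega> \<in> U then t i \<omega> G else 0)"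
proof -
  note fld = type_space_field and T = type_pba[OF i \<omega>]
  have UA: "U \<in> A"
    using U knowledge_subset[OF i] by blast
  show ?thesis
  proof (cases "\<omega> \<in> U")
    case True
    have "t i \<omega> (G - U) \<le> t i \<omega> (\<Omega> - U)"
      using field_subset[OF fld G] by (intro pba_mono[OF fld T] field_Diff[OF fld] field_compl[OF fld] G UA) auto
    moreover have "t i \<omega> (\<Omega> - U) = 0"
      using pba_compl[OF fld T UA] type_known_event[OF i U True] by simp
    moreover have "t i \<omega> G = t i \<omega> (G \<inter> U) + t i \<omega> (G - U)" "0 \<le> t i \<omega> (G - U)"
      using pba_Int_Diff[OF fld T G UA] pba_nonneg[OF T field_Diff[OF fld G UA]] by simp_all
    ultimately show ?thesis
      using True by simp
  next
    case False
    have "t i \<omega> (G \<inter> U) \<le> t i \<omega> U"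
      by (intro pba_mono[OF fld T] field_Int[OF fld G UA] UA) auto
    moreover have "0 \<le> t i \<omega> (G \<inter> U)"
      using pba_nonneg[OF T field_Int[OF fld G UA]] .
    ultimately show ?thesis
      using False type_known_event_compl[OF i U] \<omega> by simp
  qed
qed

lemma type_Diff_known_event_le:
  assumes i: "i \<in> N" and U: "U \<in> M i" and E: "E \<in> A" and \<omega>: "\<omega> \<in> \<Omega>"
  shows "t i \<omega> (U - E) \<le> (if \<omega> \<in> U then 1 - t i \<omega> E else 0)"
proof -
  note fld = type_space_field and T = type_pba[OF i \<omega>]
  have UA: "U \<in> A"
    using U knowledge_subset[OF i] by blast
  show ?thesis
  proof (cases "\<omega> \<in> U")
    case True
    have "t i \<omega> (U - E) \<le> t i \<omega> (\<Omega> - E)"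
      using field_subset[OF fld UA] E by (intro pba_mono[OF fld T] field_Diff[OF fld UA] field_compl[OF fld]) auto
    then show ?thesis
      using pba_compl[OF fld T E] True by simp
  next
    case False
    have "t i \<omega> (U - E) \<le> t i \<omega> U"
      by (intro pba_mono[OF fld T] field_Diff[OF fld UA E] UA) auto
    then show ?thesis
      using False \<omega> type_known_event_compl[OF i U] by simp
  qed
qed

lemma type_conv_subset_pba:
  assumes i: "i \<in> N"
  shows "type_conv \<Omega> (t i) \<subseteq> pba \<Omega> A"
proof
  fix R assume "R \<in> type_conv \<Omega> (t i)"
  then obtain W a where W: "W \<subseteq> \<Omega>" "\<forall>\<omega>\<in>W. 0 \<le> a \<omega>" "(\<Sum>\<omega>\<in>W. a \<omega>) = 1"
    and R: "R = (\<lambda>E. \<Sum>\<omega>\<in>W. a \<omega> * t i \<omega> E)"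
    unfolding type_conv_def by blast
  have T: "t i \<omega> \<in> pba \<Omega> A" if "\<omega> \<in> W" for \<omega>
    using that W(1) type_pba[OF i] by blast
  show "R \<in> pba \<Omega> A"
    unfolding pba_def mem_Collect_eq
  proof (intro conjI ballI impI)
    fix E F assume "E \<in> A" "F \<in> A" "E \<inter> F = {}"
    then show "R (E \<union> F) = R E + R F"
      unfolding R using pba_additive[OF T] by (simp add: distrib_left sum.distrib)
  next
    fix E assume "E \<in> A"
    then show "0 \<le> R E"
      unfolding R using W(2) pba_nonneg[OF T] by (simp add: sum_nonneg)
  next
    show "R \<Omega> = 1"
      unfolding R using W(3) pba_space[OF T] by simp
  qed
qed

lemma Pi_set_iff_pointwise_adherent:
  assumes "i \<in> N" "P \<in> pba \<Omega> A"
  shows "P \<in> Pi_set \<Omega> A t i \<longleftrightarrow> pointwise_adherent A (type_conv \<Omega> (t i)) P"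
  unfolding Pi_set_def
  using weak_star_closure_iff_pointwise_adherent[OF type_space_field type_conv_subset_pba[OF assms(1)] assms(2)] .

text \<open>Take for U the set where an M_i-simple uniform approximation of t_i(.,E) is close to 1.\<close>
lemma known_event_types_approx_above:
  assumes i: "i \<in> N" and E: "E \<in> A" "\<forall>\<omega>\<in>E. t i \<omega> E = 1" and "0 < \<delta>"
  shows "\<exists>U\<in>M i. E \<subseteq> U \<and> (\<forall>\<omega>\<in>\<Omega>. t i \<omega> (U - E) \<le> \<delta>)"
proof -
  note fld = type_space_field
  obtain Fs c where approx: "simple_approx \<Omega> (M i) (\<lambda>\<omega>. t i \<omega> E) Fs c (\<delta> / 2)"
    using Bfun_simple_approx[OF type_in_Bfun[OF i E(1)]] \<open>0 < \<delta>\<close> by (meson half_gt_zero)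
  let ?s = "\<lambda>\<omega>. \<Sum>F\<in>Fs. c F * indicator F \<omega>"
  define U where "U = {\<omega>\<in>\<Omega>. ?s \<omega> \<in> {1 - \<delta> / 2<..}}"
  have close: "\<bar>t i \<omega> E - ?s \<omega>\<bar> < \<delta> / 2" if "\<omega> \<in> \<Omega>" for \<omega>
    using approx that unfolding simple_approx_def by blast
  have UM: "U \<in> M i"
    unfolding U_def using approx
    by (intro field_simple_preimage[OF knowledge_field[OF i]]) (auto simp: simple_approx_def)
  have "E \<subseteq> U"
  proof
    fix \<omega> assume "\<omega> \<in> E"
    then have "\<omega> \<in> \<Omega>" "t i \<omega> E = 1"
      using E field_subset[OF fld E(1)] by auto
    moreover have "1 - \<delta> / 2 < ?s \<omega>"
      using close[OF \<open>\<omega> \<in> \<Omega>\<close>] \<open>t i \<omega> E = 1\<close> by linarith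
    ultimately show "\<omega> \<in> U"
      unfolding U_def by simp
  qed
  moreover have "t i \<omega> (U - E) \<le> \<delta>" if "\<omega> \<in> \<Omega>" for \<omega>
  proof (cases "\<omega> \<in> U")
    case True
    then have "t i \<omega> (U - E) \<le> 1 - t i \<omega> E"
      using type_Diff_known_event_le[OF i UM E(1) that] by simp
    moreover have "1 - \<delta> / 2 < ?s \<omega>"
      using True unfolding U_def by simp
    ultimately show ?thesis
      using close[OF that] by linarith
  next
    case False
    then show ?thesis
      using type_Diff_known_event_le[OF i UM E(1) that] \<open>0 < \<delta>\<close> by simp
  qed
  ultimately show ?thesis
    using UM by blast
qed

lemma known_event_approx_above:
  assumes i: "i \<in> N" and adh: "pointwise_adherent A (type_conv \<Omega> (t i)) P"
    and E: "E \<in> A" "\<forall>\<omega>\<in>E. t i \<omega> E = 1" and "0 < \<delta>"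
  shows "\<exists>U\<in>M i. E \<subseteq> U \<and> P (U - E) \<le> \<delta>"
proof -
  obtain U where U: "U \<in> M i" "E \<subseteq> U" and below: "\<And>\<omega>. \<omega> \<in> \<Omega> \<Longrightarrow> t i \<omega> (U - E) \<le> \<delta>"
    using known_event_types_approx_above[OF i E \<open>0 < \<delta>\<close>] by blast
  have "U - E \<in> A"
    using U(1) knowledge_subset[OF i] E(1) by (blast intro: field_Diff[OF type_space_field])
  then have "P (U - E) \<le> \<delta>"
  proof (rule pointwise_adherent_le[OF adh])
    fix R assume "R \<in> type_conv \<Omega> (t i)"
    then show "R (U - E) \<le> \<delta>"
      using below by (rule type_conv_le)
  qed
  then show ?thesis
    using U by blast
qed

lemma type_conv_conditional:
  assumes i: "i \<in> N" and R: "R \<in> type_conv \<Omega> (t i)" and U: "U \<in> M i" and pos: "0 < R U"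
  shows "\<exists>R'\<in>type_conv \<Omega> (t i). \<forall>G\<in>A. R' G = R (G \<inter> U) / R U"
proof -
  obtain W a where W: "finite W" "W \<subseteq> \<Omega>" "\<forall>\<omega>\<in>W. 0 \<le> a \<omega>"
    and R_eq: "R = (\<lambda>E. \<Sum>\<omega>\<in>W. a \<omega> * t i \<omega> E)"
    using R unfolding type_conv_def by blast
  have R_Int: "R (G \<inter> U) = (\<Sum>\<omega>\<in>W \<inter> U. a \<omega> * t i \<omega> G)" if "G \<in> A" for G
  proof -
    have "R (G \<inter> U) = (\<Sum>\<omega>\<in>W. if \<omega> \<in> U then a \<omega> * t i \<omega> G else 0)"
      unfolding R_eq using W(2) type_Int_known_event[OF i U that] by (intro sum.cong) auto
    also have "\<dots> = (\<Sum>\<omega>\<in>W \<inter> U. a \<omega> * t i \<omega> G)"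
      using W(1) by (simp add: sum.inter_restrict)
    finally show ?thesis .
  qed
  have "U = \<Omega> \<inter> U"
    using field_subset[OF knowledge_field[OF i] U] by blast
  then have R_U: "R U = (\<Sum>\<omega>\<in>W \<inter> U. a \<omega>)"
    using R_Int[OF field_space[OF type_space_field]] W(2) pba_space[OF type_pba[OF i]]
    by (simp add: subset_eq)
  define R' where "R' = (\<lambda>X. \<Sum>\<omega>\<in>W \<inter> U. a \<omega> / R U * t i \<omega> X)"
  have "W \<inter> U \<noteq> {}"
    using R_U pos by auto
  then have "R' \<in> type_conv \<Omega> (t i)"
    unfolding type_conv_def R'_def using W pos R_U
    by (intro CollectI exI[of _ "W \<inter> U"] exI[of _ "\<lambda>\<omega>. a \<omega> / R U"])
      (auto simp: sum_divide_distrib[symmetric])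
  moreover have "\<forall>G\<in>A. R' G = R (G \<inter> U) / R U"
    by (simp add: R'_def R_Int sum_divide_distrib)
  ultimately show ?thesis
    by blast
qed

text \<open>Conditioning R on the known event U and renormalising is again a mixture of types;
  on events G it approximates P(G \<inter> E) / P(E) because P(U - E) is small.\<close>
lemma pointwise_adherent_conditional:
  assumes i: "i \<in> N" and P: "P \<in> pba \<Omega> A" and adh: "pointwise_adherent A (type_conv \<Omega> (t i)) P"
    and E: "E \<in> A" "\<forall>\<omega>\<in>E. t i \<omega> E = 1" and pos: "0 < P E"
  shows "pointwise_adherent A (type_conv \<Omega> (t i)) (conditional A P E)"
  unfolding pointwise_adherent_def
proof (intro allI impI)
  note fld = type_space_field
  fix Gs and \<epsilon> :: real assume Gs: "finite Gs \<and> Gs \<subseteq> A \<and> 0 < \<epsilon>"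
  define \<kappa> where "\<kappa> = min (P E / 4) (P E * \<epsilon> / 16)"
  have "\<kappa> \<le> P E * \<epsilon> / 16"
    by (simp add: \<kappa>_def)
  then have \<kappa>: "0 < \<kappa>" "4 * \<kappa> \<le> P E" "8 * \<kappa> / P E \<le> \<epsilon> / 2"
    using pos Gs by (simp_all add: \<kappa>_def field_simps)
  obtain U where U: "U \<in> M i" "E \<subseteq> U" "P (U - E) \<le> \<kappa>"
    using known_event_approx_above[OF i adh E \<kappa>(1)] by blast
  have UA: "U \<in> A"
    using U(1) knowledge_subset[OF i] by blast
  have "(\<lambda>G. G \<inter> U) ` Gs \<subseteq> A"
    using Gs UA field_Int[OF fld] by blast
  then have tests: "finite (insert U ((\<lambda>G. G \<inter> U) ` Gs)) \<and> insert U ((\<lambda>G. G \<inter> U) ` Gs) \<subseteq> A \<and> 0 < \<kappa>"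
    using Gs UA \<kappa>(1) by simp
  obtain R where R: "R \<in> type_conv \<Omega> (t i)"
    and R_close: "\<forall>G\<in>insert U ((\<lambda>G. G \<inter> U) ` Gs). \<bar>R G - P G\<bar> < \<kappa>"
    using adh[unfolded pointwise_adherent_def, rule_format, OF tests] by blast
  have "P E \<le> P U"
    using pba_mono[OF fld P E(1) UA U(2)] .
  moreover have "\<bar>R U - P U\<bar> < \<kappa>"
    using R_close by blast
  ultimately have "0 < R U"
    using \<kappa>(1,2) by linarith
  then obtain R' where R': "R' \<in> type_conv \<Omega> (t i)" "\<forall>G\<in>A. R' G = R (G \<inter> U) / R U"
    using type_conv_conditional[OF i R U(1)] by blast
  have "\<bar>R' G - conditional A P E G\<bar> < \<epsilon>" if "G \<in> Gs" for G
  proof -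
    have "G \<in> A"
      using that Gs by blast
    then have "\<bar>R (G \<inter> U) / R U - P (G \<inter> E) / P E\<bar> \<le> 8 * \<kappa> / P E"
      using R_close that
      by (intro pba_conditional_perturbation_le[OF fld P _ E(1) UA U(2,3) pos \<kappa>(2)]) auto
    then show ?thesis
      using R'(2) \<open>G \<in> A\<close> \<kappa>(3) Gs by (simp add: conditional_def)
  qed
  then show "\<exists>R\<in>type_conv \<Omega> (t i). \<forall>G\<in>Gs. \<bar>R G - conditional A P E G\<bar> < \<epsilon>"
    using R'(1) by blast
qed

lemma common_certainty_prior:
  assumes I: "I \<subseteq> N" and E: "E \<in> A" "\<forall>i\<in>I. \<forall>\<omega>\<in>E. t i \<omega> E = 1"
    and finite_priors: "\<And>J. finite J \<Longrightarrow> J \<subseteq> I \<Longrightarrow>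
      \<exists>P\<in>pba \<Omega> A. (\<forall>j\<in>J. P \<in> Pi_set \<Omega> A t j) \<and> 0 < P E"
  shows "\<exists>Q\<in>pba \<Omega> A. Q E = 1 \<and> (\<forall>i\<in>I. Q \<in> Pi_set \<Omega> A t i)"
proof -
  note fld = type_space_field
  define K where "K = Pi\<^sub>E UNIV (\<lambda>_. {0..1}) \<inter> pba \<Omega> A \<inter> {Q. Q E = 1}"
  define C where "C i = {Q. pointwise_adherent A (type_conv \<Omega> (t i)) Q}" for i
  have "compact K"
    unfolding K_def
    by (intro compact_Int_closed compact_unit_valued closed_pba closed_Collect_eq
        continuous_on_const continuous_on_product_coordinates)
  moreover have "closed (C i)" for i
    unfolding C_def by (rule closed_pointwise_adherent)
  moreover have "K \<inter> (\<Inter>j\<in>J. C j) \<noteq> {}" if J: "finite J" "J \<subseteq> I" for J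
  proof -
    obtain P where P: "P \<in> pba \<Omega> A" "\<forall>j\<in>J. P \<in> Pi_set \<Omega> A t j" "0 < P E"
      using finite_priors[OF J] by blast
    have "conditional A P E \<in> K"
      unfolding K_def
      using conditional_unit_valued[OF fld P(1) E(1) P(3)] conditional_pba[OF fld P(1) E(1) P(3)]
        conditional_self[where P = P, OF E(1) P(3)] by blast
    moreover have "conditional A P E \<in> C j" if "j \<in> J" for j
    proof -
      have "j \<in> N" "\<forall>\<omega>\<in>E. t j \<omega> E = 1"
        using that J(2) I E(2) by auto
      moreover have "pointwise_adherent A (type_conv \<Omega> (t j)) P"
        using Pi_set_iff_pointwise_adherent[OF \<open>j \<in> N\<close> P(1)] P(2) that by blast
      ultimately show ?thesis
        unfolding C_def using pointwise_adherent_conditional P(1,3) E(1) by blast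
    qed
    ultimately show ?thesis
      by blast
  qed
  ultimately have "K \<inter> (\<Inter>i\<in>I. C i) \<noteq> {}"
    by (rule compact_imp_fip_image)
  then obtain Q where Q: "Q \<in> pba \<Omega> A" "Q E = 1" "\<forall>i\<in>I. pointwise_adherent A (type_conv \<Omega> (t i)) Q"
    unfolding K_def C_def by blast
  have "Q \<in> Pi_set \<Omega> A t i" if "i \<in> I" for i
    using Pi_set_iff_pointwise_adherent[OF _ Q(1), of i] Q(3) I that by blast
  then have "\<forall>i\<in>I. Q \<in> Pi_set \<Omega> A t i"
    by blast
  then show ?thesis
    using Q by blast
qed

lemma cc_component_certain_event:
  assumes S: "cc_component \<Omega> A t I S" and I: "I \<subseteq> N" "I \<noteq> {}"
  obtains E where "E \<in> A" "E \<subseteq> S" "\<forall>i\<in>I. \<forall>\<omega>\<in>E. t i \<omega> E = 1"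
    "\<And>J. J \<subseteq> I \<Longrightarrow> cc_component \<Omega> A t J E"
proof -
  obtain E where E: "E \<in> A" "E \<subseteq> S" "\<forall>\<omega>\<in>S. \<forall>i\<in>I. t i \<omega> E = 1" and "S \<noteq> {}" "S \<subseteq> \<Omega>"
    using S unfolding cc_component_def by blast
  obtain i \<omega> where "i \<in> I" "\<omega> \<in> S"
    using I(2) \<open>S \<noteq> {}\<close> by blast
  moreover have "i \<in> N" "\<omega> \<in> \<Omega>"
    using \<open>i \<in> I\<close> \<open>\<omega> \<in> S\<close> I(1) \<open>S \<subseteq> \<Omega>\<close> by auto
  ultimately have "t i \<omega> E = 1" "t i \<omega> {} = 0"
    using E(3) pba_empty[OF type_space_field type_pba] by auto
  then have "E \<noteq> {}"
    by auto
  then have "cc_component \<Omega> A t J E" if "J \<subseteq> I" for J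
    unfolding cc_component_def using E \<open>S \<subseteq> \<Omega>\<close> that by blast
  then show thesis
    using that E by blast
qed

lemma consistent_on_from_finite_subfamilies:
  assumes I: "I \<subseteq> N" and S: "cc_component \<Omega> A t I S"
    and finite_consistent: "\<And>J E. finite J \<Longrightarrow> J \<subseteq> I \<Longrightarrow> cc_component \<Omega> A t J E \<Longrightarrow>
      consistent_on \<Omega> A t J E"
  shows "consistent_on \<Omega> A t I S"
proof (cases "finite I")
  case True
  then show ?thesis
    using finite_consistent S by blast
next
  case False
  then have "I \<noteq> {}"
    by auto
  then obtain E where E: "E \<in> A" "E \<subseteq> S" "\<forall>i\<in>I. \<forall>\<omega>\<in>E. t i \<omega> E = 1"
    and cc_E: "\<And>J. J \<subseteq> I \<Longrightarrow> cc_component \<Omega> A t J E"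
    using cc_component_certain_event[OF S I] by blast
  have "\<exists>P\<in>pba \<Omega> A. (\<forall>j\<in>J. P \<in> Pi_set \<Omega> A t j) \<and> 0 < P E" if "finite J" "J \<subseteq> I" for J
    using finite_consistent[OF that cc_E[OF that(2)]] E(1) by (rule consistent_on_imp_positive)
  then obtain Q where Q: "Q \<in> pba \<Omega> A" "Q E = 1" "\<forall>i\<in>I. Q \<in> Pi_set \<Omega> A t i"
    using common_certainty_prior[OF I E(1,3)] by blast
  have "S \<subseteq> \<Omega>"
    using S by (simp add: cc_component_def)
  then show ?thesis
    using Q(2) by (intro consistent_onI[OF type_space_field Q(1,3) E(1,2)]) auto
qed

end

theorem lemma6:
  fixes \<Omega> :: "'a set" and A :: "'a set set" and N :: "'i set"
    and M :: "'i \<Rightarrow> 'a set set" and t :: "'i \<Rightarrow> 'a \<Rightarrow> 'a set \<Rightarrow> real"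
  assumes "type_space \<Omega> A N M t"
  shows "universally_consistent \<Omega> A N t \<longleftrightarrow>
    (\<forall>I. I \<subseteq> N \<longrightarrow> (\<forall>S. cc_component \<Omega> A t I S \<longrightarrow> consistent_on \<Omega> A t I S))"
proof
  assume UC: "universally_consistent \<Omega> A N t"
  show "\<forall>I. I \<subseteq> N \<longrightarrow> (\<forall>S. cc_component \<Omega> A t I S \<longrightarrow> consistent_on \<Omega> A t I S)"
  proof (intro allI impI)
    fix I S assume I: "I \<subseteq> N" and S: "cc_component \<Omega> A t I S"
    have "consistent_on \<Omega> A t J E" if "finite J" "J \<subseteq> I" "cc_component \<Omega> A t J E" for J E
      using UC[unfolded universally_consistent_def, rule_format, of J E] that I by blast
    then show "consistent_on \<Omega> A t I S"
      by (rule consistent_on_from_finite_subfamilies[OF assms I S])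
  qed
qed (auto simp: universally_consistent_def)

end
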